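(* For $n\ge 1$ let $G_n$ be the number of domino tilings of $C_4\times P_n$. Then for all $n\ge 1$ $$G_n=\frac16\Big[(2+\sqrt3)^{n+1}+(2-\sqrt3)^{n+1}\Big]+\frac13(-1)^n,$$ and for all $n\ge1$ we have $G_{2n}=A_n^2$ and $G_{2n-1}=2B_n^2$, where $$A_n=\frac16\Big[(3+\sqrt3)(2+\sqrt3)^n+(3-\sqrt3)(2-\sqrt3)^n\Big],\qquad B_n=\frac{1}{2\sqrt3}\Big[(2+\sqrt3)^n-(2-\sqrt3)^n\Big].$$
   Context: For graphs $H,K$, $H\times K$ denotes the Cartesian product. $P_n$ is the path on $n$ vertices and $C_4$ is the cycle on $4$ vertices. A domino tiling of a finite graph means a perfect matching of it, so the number of domino tilings of a graph is its number of perfect matchings. Equivalently, $A_n$ and $B_n$ are the integer sequences with $A_1=3$, $A_2=11$, $A_n=4A_{n-1}-A_{n-2}$, and $B_1=1$, $B_2=4$, $B_n=4B_{n-1}-B_{n-2}$ for $n\ge3$. *)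

theory Defs
  imports Complex_Main
begin

text \<open>Finite simple graphs as a pair (vertex set, edge set), edges being 2-element sets.\<close>
type_synonym 'a sgraph = "'a set \<times> 'a set set"

definition path_graph :: "nat \<Rightarrow> nat sgraph" where
  "path_graph n = ({1..n}, {{i, i + 1} | i. 1 \<le> i \<and> i + 1 \<le> n})"

text \<open>Cycle C_n on vertices 0..n-1 (used for n >= 3).\<close>
definition cycle_graph :: "nat \<Rightarrow> nat sgraph" where
  "cycle_graph n = ({0..<n}, {{i, (i + 1) mod n} | i. i < n})"

definition cart_prod :: "'a sgraph \<Rightarrow> 'b sgraph \<Rightarrow> ('a \<times> 'b) sgraph" where
  "cart_prod G H =
     (fst G \<times> fst H,
      {{(a, w), (b, w)} | a b w. {a, b} \<in> snd G \<and> w \<in> fst H} \<union>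
      {{(v, x), (v, y)} | v x y. v \<in> fst G \<and> {x, y} \<in> snd H})"

text \<open>Perfect matchings (= domino tilings) of a graph.\<close>
definition perfect_matchings :: "'a sgraph \<Rightarrow> 'a set set set" where
  "perfect_matchings G = {M. M \<subseteq> snd G \<and> (\<forall>v\<in>fst G. \<exists>!e. e \<in> M \<and> v \<in> e)}"

definition num_domino_tilings :: "'a sgraph \<Rightarrow> nat" where
  "num_domino_tilings G = card (perfect_matchings G)"

end

theory Submission
  imports Defs
begin

text \<open>Transfer matrix argument. Cutting a tiling of \<open>K \<times> P\<^sub>n\<^sub>+\<^sub>1\<close> between the
  levels \<open>n\<close> and \<open>n + 1\<close>, the rungs crossing the cut cover a set \<open>T\<close> of top vertices of
  \<open>K \<times> P\<^sub>n\<close>, the top level is tiled by a perfect matching of \<open>K\<close> minus \<open>T\<close>, and the rest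
  is a tiling of \<open>K \<times> P\<^sub>n\<close> minus \<open>T \<times> {n}\<close>. For \<open>K = C\<^sub>4\<close> only six sets \<open>T\<close> matter
  (none, all, and the four edges), giving a linear recursion whose solution is a combination of
  \<open>V\<^sub>k = (2 + \<surd>3)\<^sup>k + (2 - \<surd>3)\<^sup>k\<close> and \<open>(-1)\<^sup>n\<close>; the square identities then follow from
  \<open>(2 + \<surd>3)(2 - \<surd>3) = 1\<close>.\<close>

lemma ex_singleton_insert_iff: "a \<notin> X \<Longrightarrow> (\<exists>e. insert a X = {e}) \<longleftrightarrow> X = {}"
  by auto

lemma ex_singleton_image_iff:
  assumes "inj_on f A" "X \<subseteq> A"
  shows "(\<exists>e. f ` X = {e}) \<longleftrightarrow> (\<exists>x. X = {x})"
proof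
  assume "\<exists>e. f ` X = {e}"
  then obtain e where e: "f ` X = {e}" ..
  then obtain x where "x \<in> X" "f x = e" by (metis imageE insertI1)
  moreover have "y = x" if "y \<in> X" for y
    using that e \<open>x \<in> X\<close> \<open>f x = e\<close> assms inj_onD[OF assms(1)] by blast
  ultimately show "\<exists>x. X = {x}" by blast
qed auto

lemma sum_Pow_insert:
  assumes "finite A" "a \<notin> A"
  shows "(\<Sum>B\<in>Pow (insert a A). f B) = (\<Sum>B\<in>Pow A. f B) + (\<Sum>B\<in>Pow A. f (insert a B))"
proof -
  have "inj_on (insert a) (Pow A)"
    by (rule inj_onI) (use assms(2) in \<open>auto simp: insert_ident\<close>)
  moreover have "Pow A \<inter> insert a ` Pow A = {}" using assms(2) by auto
  ultimately show ?thesis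
    unfolding Pow_insert using assms(1) by (simp add: sum.union_disjoint sum.reindex)
qed

section \<open>Tilings of prisms over a graph\<close>

definition simple_graph :: "'a sgraph \<Rightarrow> bool" where
  "simple_graph K \<longleftrightarrow> finite (fst K) \<and> (\<forall>e\<in>snd K. e \<subseteq> fst K \<and> card e = 2)"

lemma simple_graph_finite_edges: "simple_graph K \<Longrightarrow> finite (snd K)"
  unfolding simple_graph_def by (meson PowI finite_Pow_iff finite_subset subsetI)

lemma simple_graph_edge_doubleton: "simple_graph K \<Longrightarrow> e \<in> snd K \<Longrightarrow> \<exists>a b. e = {a, b}"
  unfolding simple_graph_def by (meson card_2_iff)

definition level_edges :: "'a set set \<Rightarrow> nat \<Rightarrow> ('a \<times> nat) set set" where
  "level_edges E w = (\<lambda>e. (\<lambda>a. (a, w)) ` e) ` E"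

definition rung :: "'a \<Rightarrow> nat \<Rightarrow> ('a \<times> nat) set" where
  "rung v x = {(v, x), (v, Suc x)}"

definition rungs :: "'a set \<Rightarrow> nat \<Rightarrow> ('a \<times> nat) set set" where
  "rungs T x = (\<lambda>v. rung v x) ` T"

definition prism_edges :: "'a sgraph \<Rightarrow> nat \<Rightarrow> ('a \<times> nat) set set" where
  "prism_edges K n = (\<Union>w\<in>{1..n}. level_edges (snd K) w) \<union> (\<Union>x\<in>{1..<n}. rungs (fst K) x)"

definition incident :: "'a \<Rightarrow> 'a set set \<Rightarrow> 'a set set" where
  "incident p M = {e \<in> M. p \<in> e}"

text \<open>Tilings of \<open>K \<times> P\<^sub>n\<close> with the top vertices \<open>S \<times> {n}\<close> removed; these are the vertices
  that a tiling of a taller prism covers by rungs to level \<open>n + 1\<close>.\<close>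
definition prism_tilings :: "'a sgraph \<Rightarrow> nat \<Rightarrow> 'a set \<Rightarrow> ('a \<times> nat) set set set" where
  "prism_tilings K n S = {M. M \<subseteq> prism_edges K n \<and> (\<forall>v\<in>fst K. \<forall>x\<in>{1..n}.
     if x = n \<and> v \<in> S then incident (v, x) M = {} else (\<exists>e. incident (v, x) M = {e}))}"

definition level_tilings :: "'a sgraph \<Rightarrow> nat \<Rightarrow> 'a set \<Rightarrow> ('a \<times> nat) set set set" where
  "level_tilings K w U = {H. H \<subseteq> level_edges (snd K) w \<and> (\<forall>v\<in>fst K.
     if v \<in> U then (\<exists>e. incident (v, w) H = {e}) else incident (v, w) H = {})}"

lemma cart_prod_path_graph:
  assumes "simple_graph K"
  shows "cart_prod K (path_graph n) = (fst K \<times> {1..n}, prism_edges K n)"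
proof -
  have hor: "{{(a, w), (b, w)} | a b w. {a, b} \<in> snd K \<and> w \<in> {1..n}}
      = (\<Union>w\<in>{1..n}. level_edges (snd K) w)"
  proof (intro equalityI subsetI)
    fix e assume "e \<in> (\<Union>w\<in>{1..n}. level_edges (snd K) w)"
    then obtain w e0 where "w \<in> {1..n}" "e0 \<in> snd K" "e = (\<lambda>a. (a, w)) ` e0"
      by (auto simp: level_edges_def)
    moreover obtain a b where "e0 = {a, b}"
      using simple_graph_edge_doubleton[OF assms \<open>e0 \<in> snd K\<close>] by blast
    ultimately show "e \<in> {{(a, w), (b, w)} | a b w. {a, b} \<in> snd K \<and> w \<in> {1..n}}"
      by (intro CollectI exI[of _ a] exI[of _ b] exI[of _ w]) simp
  next
    fix e assume "e \<in> {{(a, w), (b, w)} | a b w. {a, b} \<in> snd K \<and> w \<in> {1..n}}"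
    then obtain a b w where "e = {(a, w), (b, w)}" "{a, b} \<in> snd K" "w \<in> {1..n}" by blast
    then show "e \<in> (\<Union>w\<in>{1..n}. level_edges (snd K) w)"
      unfolding level_edges_def by (intro UN_I[of w] image_eqI[of _ _ "{a, b}"]) auto
  qed
  have ver: "{{(v, x), (v, y)} | v x y. v \<in> fst K \<and> {x, y} \<in> snd (path_graph n)}
      = (\<Union>x\<in>{1..<n}. rungs (fst K) x)"
  proof (intro equalityI subsetI)
    fix e assume "e \<in> {{(v, x), (v, y)} | v x y. v \<in> fst K \<and> {x, y} \<in> snd (path_graph n)}"
    then obtain v x y i where "e = {(v, x), (v, y)}" "v \<in> fst K" "{x, y} = {i, i + 1}" "1 \<le> i" "i + 1 \<le> n"
      by (auto simp: path_graph_def)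
    then show "e \<in> (\<Union>x\<in>{1..<n}. rungs (fst K) x)"
      unfolding rungs_def rung_def doubleton_eq_iff by (intro UN_I[of i]) auto
  next
    fix e assume "e \<in> (\<Union>x\<in>{1..<n}. rungs (fst K) x)"
    then obtain v x where "e = {(v, x), (v, Suc x)}" "v \<in> fst K" "1 \<le> x" "x < n"
      by (auto simp: rungs_def rung_def)
    then show "e \<in> {{(v, x), (v, y)} | v x y. v \<in> fst K \<and> {x, y} \<in> snd (path_graph n)}"
      unfolding path_graph_def by (intro CollectI exI[of _ v] exI[of _ x] exI[of _ "Suc x"]) auto
  qed
  show ?thesis
    unfolding cart_prod_def prism_edges_def hor[symmetric] ver[symmetric]
    by (simp add: path_graph_def)
qed

lemma Ex1_incident_iff: "(\<exists>!e. e \<in> M \<and> p \<in> e) \<longleftrightarrow> (\<exists>e. incident p M = {e})"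
proof
  assume "\<exists>!e. e \<in> M \<and> p \<in> e"
  then show "\<exists>e. incident p M = {e}" unfolding incident_def by blast
next
  assume "\<exists>e. incident p M = {e}"
  then obtain e where "{e \<in> M. p \<in> e} = {e}" unfolding incident_def ..
  then show "\<exists>!e. e \<in> M \<and> p \<in> e" by (metis (mono_tags, lifting) mem_Collect_eq singletonD singletonI)
qed

lemma num_domino_tilings_prism:
  assumes "simple_graph K"
  shows "num_domino_tilings (cart_prod K (path_graph n)) = card (prism_tilings K n {})"
  unfolding num_domino_tilings_def perfect_matchings_def prism_tilings_def
    cart_prod_path_graph[OF assms] Ex1_incident_iff
  by simp

lemma level_edges_level: "e \<in> level_edges E w \<Longrightarrow> p \<in> e \<Longrightarrow> snd p = w"
  unfolding level_edges_def by auto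

lemma prism_edges_level: "e \<in> prism_edges K n \<Longrightarrow> p \<in> e \<Longrightarrow> 1 \<le> snd p \<and> snd p \<le> n"
  unfolding prism_edges_def rungs_def rung_def using level_edges_level by fastforce

lemma incident_level_edges: "H \<subseteq> level_edges E w \<Longrightarrow> snd p \<noteq> w \<Longrightarrow> incident p H = {}"
  unfolding incident_def using level_edges_level by blast

lemma incident_prism_edges: "M \<subseteq> prism_edges K n \<Longrightarrow> n < snd p \<Longrightarrow> incident p M = {}"
  unfolding incident_def using prism_edges_level by fastforce

lemma incident_rungs:
  "incident (v, x) (rungs T n) = (if v \<in> T \<and> (x = n \<or> x = Suc n) then {rung v n} else {})"
  unfolding incident_def rungs_def rung_def by auto

lemma incident_Un: "incident p (A \<union> B) = incident p A \<union> incident p B"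
  unfolding incident_def by auto

lemma rung_notin_level_edges: "rung v n \<notin> level_edges E w"
  using level_edges_level[of "rung v n" E w "(v, n)"] level_edges_level[of "rung v n" E w "(v, Suc n)"]
  by (auto simp: rung_def)

lemma rung_notin_prism_edges: "rung v n \<notin> prism_edges K n"
  using prism_edges_level[of "rung v n" K n "(v, Suc n)"] by (auto simp: rung_def)

lemma rung_inj: "rung u n = rung v n \<longleftrightarrow> u = v"
  unfolding rung_def by (auto simp: doubleton_eq_iff)

lemma prism_edges_Suc:
  "1 \<le> n \<Longrightarrow> prism_edges K (Suc n) = prism_edges K n \<union> level_edges (snd K) (Suc n) \<union> rungs (fst K) n"
  unfolding prism_edges_def by (auto simp: le_Suc_eq less_Suc_eq atLeastAtMostSuc_conv atLeastLessThanSuc)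

lemma level_edges_prism_edges_disjoint:
  assumes "{} \<notin> E" shows "level_edges E (Suc n) \<inter> prism_edges K n = {}"
proof (rule ccontr)
  assume "level_edges E (Suc n) \<inter> prism_edges K n \<noteq> {}"
  then obtain e where e: "e \<in> level_edges E (Suc n)" "e \<in> prism_edges K n" by blast
  then obtain p where "p \<in> e" using assms unfolding level_edges_def by (metis ex_in_conv image_iff image_is_empty)
  then show False using level_edges_level[OF e(1)] prism_edges_level[OF e(2)] by simp
qed

lemma finite_prism_edges: "finite (snd K) \<Longrightarrow> finite (fst K) \<Longrightarrow> finite (prism_edges K n)"
  unfolding prism_edges_def level_edges_def rungs_def by simp

lemma finite_prism_tilings: "finite (snd K) \<Longrightarrow> finite (fst K) \<Longrightarrow> finite (prism_tilings K n S)"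
  by (rule finite_subset[of _ "Pow (prism_edges K n)"]) (auto simp: prism_tilings_def finite_prism_edges)

lemma finite_level_tilings: "finite (snd K) \<Longrightarrow> finite (level_tilings K w U)"
  by (rule finite_subset[of _ "Pow (level_edges (snd K) w)"]) (auto simp: level_tilings_def level_edges_def)

lemma incident_glued_top:
  assumes "H \<subseteq> level_edges E (Suc n)" "M \<subseteq> prism_edges K n"
  shows "incident (v, Suc n) (H \<union> rungs T n \<union> M)
    = (if v \<in> T then insert (rung v n) (incident (v, Suc n) H) else incident (v, Suc n) H)"
  using incident_prism_edges[OF assms(2), of "(v, Suc n)"]
  by (auto simp: incident_Un incident_rungs)

lemma incident_glued_below:
  assumes "H \<subseteq> level_edges E (Suc n)" "M \<subseteq> prism_edges K n" "x \<le> n"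
  shows "incident (v, x) (H \<union> rungs T n \<union> M)
    = (if v \<in> T \<and> x = n then insert (rung v n) (incident (v, x) M) else incident (v, x) M)"
  using incident_level_edges[OF assms(1), of "(v, x)"] assms(3)
  by (auto simp: incident_Un incident_rungs)

lemma rung_notin_incident_level:
  "H \<subseteq> level_edges E w \<Longrightarrow> rung v n \<notin> incident p H"
  unfolding incident_def using rung_notin_level_edges[of v n E w] by blast

lemma rung_notin_incident_prism:
  "M \<subseteq> prism_edges K n \<Longrightarrow> rung v n \<notin> incident p M"
  unfolding incident_def using rung_notin_prism_edges[of v n K] by blast

lemma glued_in_prism_tilings:
  assumes n: "1 \<le> n" and T: "T \<subseteq> fst K - S"
    and H: "H \<in> level_tilings K (Suc n) (fst K - S - T)" and M: "M \<in> prism_tilings K n T"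
  shows "H \<union> rungs T n \<union> M \<in> prism_tilings K (Suc n) S"
proof -
  have HE: "H \<subseteq> level_edges (snd K) (Suc n)" and ME: "M \<subseteq> prism_edges K n"
    using H M by (auto simp: level_tilings_def prism_tilings_def)
  have "H \<union> rungs T n \<union> M \<subseteq> prism_edges K (Suc n)"
    using HE ME T by (auto simp: prism_edges_Suc[OF n] rungs_def)
  moreover have "if x = Suc n \<and> v \<in> S then incident (v, x) (H \<union> rungs T n \<union> M) = {}
      else \<exists>e. incident (v, x) (H \<union> rungs T n \<union> M) = {e}"
    if v: "v \<in> fst K" and x: "x \<in> {1..Suc n}" for v x
  proof (cases "x = Suc n")
    case True
    then show ?thesis
      using H v T rung_notin_incident_level[OF HE]
      by (auto simp: incident_glued_top[OF HE ME] level_tilings_def ex_singleton_insert_iff)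
  next
    case False
    then show ?thesis
      using M v x rung_notin_incident_prism[OF ME]
      by (auto simp: incident_glued_below[OF HE ME] prism_tilings_def ex_singleton_insert_iff)
  qed
  ultimately show ?thesis unfolding prism_tilings_def by blast
qed

lemma prism_tilings_Suc_split:
  assumes n: "1 \<le> n" and M: "M \<in> prism_tilings K (Suc n) S"
  defines "T \<equiv> {v \<in> fst K. rung v n \<in> M}"
    and "H \<equiv> M \<inter> level_edges (snd K) (Suc n)" and "M' \<equiv> M \<inter> prism_edges K n"
  shows "T \<subseteq> fst K - S" and "H \<in> level_tilings K (Suc n) (fst K - S - T)"
    and "M' \<in> prism_tilings K n T" and "M = H \<union> rungs T n \<union> M'"
proof -
  have ME: "M \<subseteq> prism_edges K (Suc n)"
    and cover: "\<And>v x. v \<in> fst K \<Longrightarrow> x \<in> {1..Suc n} \<Longrightarrow> if x = Suc n \<and> v \<in> S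
      then incident (v, x) M = {} else \<exists>e. incident (v, x) M = {e}"
    using M unfolding prism_tilings_def by auto
  show glue: "M = H \<union> rungs T n \<union> M'"
    using ME unfolding prism_edges_Suc[OF n] H_def M'_def T_def rungs_def by auto
  have HE: "H \<subseteq> level_edges (snd K) (Suc n)" and ME': "M' \<subseteq> prism_edges K n"
    by (auto simp: H_def M'_def)
  have cover_glued: "\<And>v x. v \<in> fst K \<Longrightarrow> x \<in> {1..Suc n} \<Longrightarrow> if x = Suc n \<and> v \<in> S
      then incident (v, x) (H \<union> rungs T n \<union> M') = {}
      else \<exists>e. incident (v, x) (H \<union> rungs T n \<union> M') = {e}"
    using cover by (simp only: glue[symmetric])
  show TS: "T \<subseteq> fst K - S"
  proof
    fix v assume "v \<in> T"
    then have "v \<in> fst K" "rung v n \<in> incident (v, Suc n) M"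
      by (auto simp: T_def incident_def rung_def)
    then show "v \<in> fst K - S" using cover[of v "Suc n"] by auto
  qed
  have "if v \<in> fst K - S - T then \<exists>e. incident (v, Suc n) H = {e} else incident (v, Suc n) H = {}"
    if v: "v \<in> fst K" for v
  proof -
    have "if v \<in> S then incident (v, Suc n) (H \<union> rungs T n \<union> M') = {}
      else \<exists>e. incident (v, Suc n) (H \<union> rungs T n \<union> M') = {e}"
      using cover_glued[OF v, of "Suc n"] by simp
    then show ?thesis
      using v TS rung_notin_incident_level[OF HE, of v n "(v, Suc n)"]
      by (auto simp: incident_glued_top[OF HE ME'] ex_singleton_insert_iff split: if_splits)
  qed
  then show "H \<in> level_tilings K (Suc n) (fst K - S - T)"
    using HE unfolding level_tilings_def by blast
  have "if x = n \<and> v \<in> T then incident (v, x) M' = {} else \<exists>e. incident (v, x) M' = {e}"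
    if v: "v \<in> fst K" and x: "x \<in> {1..n}" for v x
    using cover_glued[OF v, of x] x rung_notin_incident_prism[OF ME', of v "(v, x)"]
    by (auto simp: incident_glued_below[OF HE ME'] ex_singleton_insert_iff)
  then show "M' \<in> prism_tilings K n T"
    using ME' unfolding prism_tilings_def by blast
qed

lemma glued_recover:
  assumes "{} \<notin> E" "T \<subseteq> V" "H \<subseteq> level_edges E (Suc n)" "M \<subseteq> prism_edges K n"
  shows "{v \<in> V. rung v n \<in> H \<union> rungs T n \<union> M} = T"
    and "(H \<union> rungs T n \<union> M) \<inter> level_edges E (Suc n) = H"
    and "(H \<union> rungs T n \<union> M) \<inter> prism_edges K n = M"
proof -
  have "rung v n \<notin> H" "rung v n \<notin> M" for v
    using assms(3,4) rung_notin_level_edges[of v n E "Suc n"] rung_notin_prism_edges[of v n K] by blast+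
  then show "{v \<in> V. rung v n \<in> H \<union> rungs T n \<union> M} = T"
    using assms(2) by (auto simp: rungs_def rung_inj)
  have "rungs T n \<inter> level_edges E (Suc n) = {}" "rungs T n \<inter> prism_edges K n = {}"
    using rung_notin_level_edges[of _ n E "Suc n"] rung_notin_prism_edges[of _ n K]
    by (auto simp: rungs_def)
  then show "(H \<union> rungs T n \<union> M) \<inter> level_edges E (Suc n) = H"
    and "(H \<union> rungs T n \<union> M) \<inter> prism_edges K n = M"
    using assms(3,4) level_edges_prism_edges_disjoint[OF assms(1), of n K] by blast+
qed

lemma prism_tilings_Suc:
  assumes "1 \<le> n"
  shows "prism_tilings K (Suc n) S = (\<Union>T\<in>Pow (fst K - S). (\<lambda>(H, M). H \<union> rungs T n \<union> M)
           ` (level_tilings K (Suc n) (fst K - S - T) \<times> prism_tilings K n T))"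
proof (intro equalityI subsetI)
  fix M assume "M \<in> prism_tilings K (Suc n) S"
  note split = prism_tilings_Suc_split[OF assms this]
  show "M \<in> (\<Union>T\<in>Pow (fst K - S).
      (\<lambda>(H, M). H \<union> rungs T n \<union> M) ` (level_tilings K (Suc n) (fst K - S - T) \<times> prism_tilings K n T))"
    by (rule UN_I[OF PowI[OF split(1)]], rule image_eqI[OF _ SigmaI[OF split(2,3)]]) (simp add: split(4)[symmetric])
next
  fix M assume "M \<in> (\<Union>T\<in>Pow (fst K - S).
      (\<lambda>(H, M). H \<union> rungs T n \<union> M) ` (level_tilings K (Suc n) (fst K - S - T) \<times> prism_tilings K n T))"
  then obtain T H M' where "T \<subseteq> fst K - S" "H \<in> level_tilings K (Suc n) (fst K - S - T)"
    "M' \<in> prism_tilings K n T" "M = H \<union> rungs T n \<union> M'" by auto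
  then show "M \<in> prism_tilings K (Suc n) S" using glued_in_prism_tilings[OF assms] by simp
qed

lemma inj_on_glue:
  assumes "{} \<notin> snd K" "T \<subseteq> fst K"
  shows "inj_on (\<lambda>(H, M). H \<union> rungs T n \<union> M) (level_tilings K (Suc n) U \<times> prism_tilings K n T)"
proof (rule inj_onI, clarsimp)
  fix H M H' M' assume "H \<in> level_tilings K (Suc n) U" "M \<in> prism_tilings K n T"
    and "H' \<in> level_tilings K (Suc n) U" "M' \<in> prism_tilings K n T"
    and eq: "H \<union> rungs T n \<union> M = H' \<union> rungs T n \<union> M'"
  then have "H \<subseteq> level_edges (snd K) (Suc n)" "M \<subseteq> prism_edges K n"
    and "H' \<subseteq> level_edges (snd K) (Suc n)" "M' \<subseteq> prism_edges K n"
    by (auto simp: level_tilings_def prism_tilings_def)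
  then show "H = H' \<and> M = M'"
    using glued_recover(2,3)[OF assms, of H n M K] glued_recover(2,3)[OF assms, of H' n M' K]
    unfolding eq by simp
qed

lemma glue_images_disjoint:
  assumes "{} \<notin> snd K" "T \<subseteq> fst K" "T' \<subseteq> fst K" "T \<noteq> T'"
  shows "(\<lambda>(H, M). H \<union> rungs T n \<union> M) ` (level_tilings K (Suc n) U \<times> prism_tilings K n T)
     \<inter> (\<lambda>(H, M). H \<union> rungs T' n \<union> M) ` (level_tilings K (Suc n) U' \<times> prism_tilings K n T') = {}"
proof (rule ccontr)
  assume "\<not> ?thesis"
  then obtain H M H' M' where "H \<in> level_tilings K (Suc n) U" "M \<in> prism_tilings K n T"
    and "H' \<in> level_tilings K (Suc n) U'" "M' \<in> prism_tilings K n T'"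
    and eq: "H \<union> rungs T n \<union> M = H' \<union> rungs T' n \<union> M'" by auto
  then have "H \<subseteq> level_edges (snd K) (Suc n)" "M \<subseteq> prism_edges K n"
    and "H' \<subseteq> level_edges (snd K) (Suc n)" "M' \<subseteq> prism_edges K n"
    by (auto simp: level_tilings_def prism_tilings_def)
  then have "T = T'"
    using glued_recover(1)[OF assms(1,2), of H n M K] glued_recover(1)[OF assms(1,3), of H' n M' K]
    unfolding eq by simp
  with \<open>T \<noteq> T'\<close> show False by contradiction
qed

lemma card_prism_tilings_Suc:
  assumes K: "simple_graph K" and n: "1 \<le> n"
  shows "card (prism_tilings K (Suc n) S) = (\<Sum>T\<in>Pow (fst K - S).
           card (level_tilings K (Suc n) (fst K - S - T)) * card (prism_tilings K n T))"
proof -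
  let ?glue = "\<lambda>T (H, M). H \<union> rungs T n \<union> M"
  let ?parts = "\<lambda>T. level_tilings K (Suc n) (fst K - S - T) \<times> prism_tilings K n T"
  have fin: "finite (fst K)" "finite (snd K)" and ne: "{} \<notin> snd K"
    using K simple_graph_finite_edges[OF K] by (auto simp: simple_graph_def)
  have "card (prism_tilings K (Suc n) S) = (\<Sum>T\<in>Pow (fst K - S). card (?glue T ` ?parts T))"
    unfolding prism_tilings_Suc[OF n]
  proof (rule card_UN_disjoint)
    show "finite (Pow (fst K - S))" using fin by simp
    show "\<forall>T\<in>Pow (fst K - S). finite (?glue T ` ?parts T)"
      by (simp add: finite_level_tilings[OF fin(2)] finite_prism_tilings[OF fin(2) fin(1)])
    show "\<forall>T\<in>Pow (fst K - S). \<forall>T'\<in>Pow (fst K - S). T \<noteq> T' \<longrightarrow> ?glue T ` ?parts T \<inter> ?glue T' ` ?parts T' = {}"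
      by (intro ballI impI glue_images_disjoint[OF ne]) auto
  qed
  also have "\<dots> = (\<Sum>T\<in>Pow (fst K - S). card (?parts T))"
    by (rule sum.cong[OF refl], rule card_image, rule inj_on_glue[OF ne]) blast
  finally show ?thesis by (simp add: card_cartesian_product)
qed

lemma prism_tilings_one: "prism_tilings K 1 S = level_tilings K 1 (fst K - S)"
proof -
  have "prism_edges K 1 = level_edges (snd K) 1" by (simp add: prism_edges_def)
  then show ?thesis unfolding prism_tilings_def level_tilings_def by auto
qed

section \<open>Prisms over the square\<close>

lemma simple_graph_cycle4: "simple_graph (cycle_graph 4)"
proof -
  have "i \<noteq> (i + 1) mod 4" for i :: nat by presburger
  then show ?thesis unfolding simple_graph_def cycle_graph_def by auto
qed

definition c4_level_edge :: "nat \<Rightarrow> nat \<Rightarrow> (nat \<times> nat) set" where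
  "c4_level_edge w i = {(i, w), ((i + 1) mod 4, w)}"

lemma level_edges_cycle4: "level_edges (snd (cycle_graph 4)) w = c4_level_edge w ` {0..<4}"
proof -
  have "snd (cycle_graph 4) = (\<lambda>i. {i, (i + 1) mod 4}) ` {0..<4}"
    by (auto simp: cycle_graph_def)
  then show ?thesis by (simp add: level_edges_def image_image c4_level_edge_def)
qed

lemma inj_on_c4_level_edge: "inj_on (c4_level_edge w) {0..<4}"
proof (rule inj_onI)
  fix i j assume "i \<in> {0..<4}" "j \<in> {0..<4}" "c4_level_edge w i = c4_level_edge w j"
  then have "i \<in> {0, 1, 2, 3}" "j \<in> {0, 1, 2, 3}" "i = j \<or> i = (j + 1) mod 4" "j = i \<or> j = (i + 1) mod 4"
    unfolding c4_level_edge_def by (auto simp: doubleton_eq_iff)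
  then show "i = j" by auto
qed

lemma mem_c4_level_edge_iff:
  assumes "i < 4" "v < 4"
  shows "(v, w) \<in> c4_level_edge w i \<longleftrightarrow> i = v \<or> i = (v + 3) mod 4"
proof -
  have "i \<in> {0, 1, 2, 3}" "v \<in> {0, 1, 2, 3}" using assms by auto
  then have "v = i \<or> v = (i + 1) mod 4 \<longleftrightarrow> i = v \<or> i = (v + 3) mod 4"
    by (elim insertE; simp)
  then show ?thesis unfolding c4_level_edge_def by auto
qed

lemma incident_c4_level_edges:
  assumes "I \<subseteq> {0..<4}" "v < 4"
  shows "incident (v, w) (c4_level_edge w ` I) = c4_level_edge w ` (I \<inter> {v, (v + 3) mod 4})"
  using assms mem_c4_level_edge_iff by (auto simp: incident_def subset_iff)

text \<open>An index set \<open>I \<subseteq> {0..<4}\<close> stands for the edges \<open>{i, (i + 1) mod 4}\<close>, \<open>i \<in> I\<close>;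
  the vertex \<open>v\<close> lies on the edges with indices \<open>v\<close> and \<open>(v + 3) mod 4\<close>.\<close>
definition c4_cover :: "nat set \<Rightarrow> nat set \<Rightarrow> bool" where
  "c4_cover U I \<longleftrightarrow> (\<forall>v<4. if v \<in> U then (v \<in> I) \<noteq> ((v + 3) mod 4 \<in> I)
     else v \<notin> I \<and> (v + 3) mod 4 \<notin> I)"

lemma level_cover_cycle4_iff:
  assumes I: "I \<subseteq> {0..<4}"
  shows "(\<forall>v\<in>fst (cycle_graph 4). if v \<in> U
        then \<exists>e. incident (v, w) (c4_level_edge w ` I) = {e}
        else incident (v, w) (c4_level_edge w ` I) = {}) \<longleftrightarrow> c4_cover U I"
proof -
  have "(\<exists>e. incident (v, w) (c4_level_edge w ` I) = {e}) \<longleftrightarrow> (v \<in> I) \<noteq> ((v + 3) mod 4 \<in> I)"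
    if "v < 4" for v
  proof -
    have "v \<noteq> (v + 3) mod 4" by presburger
    moreover have sub: "I \<inter> {v, (v + 3) mod 4} \<subseteq> {0..<4}" using I by blast
    ultimately show ?thesis
      unfolding incident_c4_level_edges[OF I that] ex_singleton_image_iff[OF inj_on_c4_level_edge sub]
      by (auto simp: Int_insert_right)
  qed
  moreover have "incident (v, w) (c4_level_edge w ` I) = {} \<longleftrightarrow> v \<notin> I \<and> (v + 3) mod 4 \<notin> I"
    if "v < 4" for v
    unfolding incident_c4_level_edges[OF I that] by auto
  ultimately show ?thesis by (auto simp: c4_cover_def cycle_graph_def)
qed

lemma level_tilings_cycle4:
  "level_tilings (cycle_graph 4) w U = image (c4_level_edge w) ` {I \<in> Pow {0..<4}. c4_cover U I}"
  unfolding level_tilings_def level_edges_cycle4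
proof (intro equalityI subsetI)
  fix H assume H: "H \<in> {H. H \<subseteq> c4_level_edge w ` {0..<4} \<and> (\<forall>v\<in>fst (cycle_graph 4).
      if v \<in> U then \<exists>e. incident (v, w) H = {e} else incident (v, w) H = {})}"
  then obtain I where I: "I \<subseteq> {0..<4}" "H = c4_level_edge w ` I"
    by (auto simp: subset_image_iff)
  then show "H \<in> image (c4_level_edge w) ` {I \<in> Pow {0..<4}. c4_cover U I}"
    using H level_cover_cycle4_iff[OF I(1)] by auto
next
  fix H assume "H \<in> image (c4_level_edge w) ` {I \<in> Pow {0..<4}. c4_cover U I}"
  then obtain I where I: "I \<subseteq> {0..<4}" "c4_cover U I" "H = c4_level_edge w ` I" by auto
  then show "H \<in> {H. H \<subseteq> c4_level_edge w ` {0..<4} \<and> (\<forall>v\<in>fst (cycle_graph 4).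
      if v \<in> U then \<exists>e. incident (v, w) H = {e} else incident (v, w) H = {})}"
    using level_cover_cycle4_iff[OF I(1)] by blast
qed

lemma card_level_tilings_cycle4:
  "card (level_tilings (cycle_graph 4) w U) = (\<Sum>I\<in>Pow {0, 1, 2, 3}. if c4_cover U I then 1 else 0)"
proof -
  have "card (level_tilings (cycle_graph 4) w U) = card {I \<in> Pow {0..<4}. c4_cover U I}"
    unfolding level_tilings_cycle4
    by (rule card_image, rule inj_on_subset[OF inj_on_image_Pow[OF inj_on_c4_level_edge]]) auto
  also have "\<dots> = (\<Sum>I\<in>Pow {0..<4}. if c4_cover U I then 1 else 0)"
    by (simp add: sum.If_cases Int_def conj_commute)
  also have "{0..<4} = {0, 1, 2, 3 :: nat}" by auto
  finally show ?thesis .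
qed

abbreviation c4_tilings :: "nat \<Rightarrow> nat set \<Rightarrow> nat" where
  "c4_tilings n S \<equiv> card (prism_tilings (cycle_graph 4) n S)"

lemma vertices_cycle4: "fst (cycle_graph 4) = {0, 1, 2, 3}"
  by (auto simp: cycle_graph_def)

lemma c4_cover_iff: "c4_cover U I \<longleftrightarrow>
    (if 0 \<in> U then (0 \<in> I) \<noteq> (3 \<in> I) else 0 \<notin> I \<and> 3 \<notin> I) \<and>
    (if 1 \<in> U then (1 \<in> I) \<noteq> (0 \<in> I) else 1 \<notin> I \<and> 0 \<notin> I) \<and>
    (if 2 \<in> U then (2 \<in> I) \<noteq> (1 \<in> I) else 2 \<notin> I \<and> 1 \<notin> I) \<and>
    (if 3 \<in> U then (3 \<in> I) \<noteq> (2 \<in> I) else 3 \<notin> I \<and> 2 \<notin> I)"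
proof -
  have "(\<forall>v<4. P v) \<longleftrightarrow> P 0 \<and> P 1 \<and> P 2 \<and> P (3 :: nat)" for P
    by (auto simp: less_Suc_eq numeral_eq_Suc)
  then show ?thesis unfolding c4_cover_def by simp
qed

lemma c4_tilings_one:
  "c4_tilings 1 {} = 2" "c4_tilings 1 {0, 1, 2, 3} = 1" "c4_tilings 1 {0, 1} = 1"
  "c4_tilings 1 {1, 2} = 1" "c4_tilings 1 {2, 3} = 1" "c4_tilings 1 {0, 3} = 1"
  unfolding prism_tilings_one card_level_tilings_cycle4 vertices_cycle4
  by (simp_all add: sum_Pow_insert c4_cover_iff)

lemma c4_tilings_Suc:
  assumes "1 \<le> n"
  shows "c4_tilings (Suc n) {} = 2 * c4_tilings n {} + c4_tilings n {0, 1, 2, 3}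
      + c4_tilings n {0, 1} + c4_tilings n {1, 2} + c4_tilings n {2, 3} + c4_tilings n {0, 3}"
    and "c4_tilings (Suc n) {0, 1, 2, 3} = c4_tilings n {}"
    and "c4_tilings (Suc n) {0, 1} = c4_tilings n {} + c4_tilings n {2, 3}"
    and "c4_tilings (Suc n) {1, 2} = c4_tilings n {} + c4_tilings n {0, 3}"
    and "c4_tilings (Suc n) {2, 3} = c4_tilings n {} + c4_tilings n {0, 1}"
    and "c4_tilings (Suc n) {0, 3} = c4_tilings n {} + c4_tilings n {1, 2}"
  using card_prism_tilings_Suc[OF simple_graph_cycle4 assms]
  unfolding card_level_tilings_cycle4 vertices_cycle4
  by (simp_all add: sum_Pow_insert c4_cover_iff insert_commute insert_Diff_if)

section \<open>Closed forms\<close>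

definition lucas_V :: "nat \<Rightarrow> real" where
  "lucas_V k = (2 + sqrt 3) ^ k + (2 - sqrt 3) ^ k"

lemma lucas_V_rec: "lucas_V (k + 2) = 4 * lucas_V (k + 1) - lucas_V k"
proof -
  have r: "(2 + sqrt 3) ^ 2 = 4 * (2 + sqrt 3) - (1::real)"
    and s: "(2 - sqrt 3) ^ 2 = 4 * (2 - sqrt 3) - (1::real)"
    by (simp_all add: power2_eq_square algebra_simps)
  have "lucas_V (k + 2) = (2 + sqrt 3) ^ k * (2 + sqrt 3) ^ 2 + (2 - sqrt 3) ^ k * (2 - sqrt 3) ^ 2"
    unfolding lucas_V_def power_add ..
  also have "\<dots> = 4 * lucas_V (k + 1) - lucas_V k"
    unfolding r s lucas_V_def by (simp add: algebra_simps)
  finally show ?thesis .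
qed

lemma lucas_V_1: "lucas_V 1 = 4" and lucas_V_2: "lucas_V 2 = 14"
  by (simp_all add: lucas_V_def power2_eq_square algebra_simps)

lemma c4_tilings_closed_form:
  assumes "1 \<le> n"
  defines "P \<equiv> (lucas_V (n + 1) - lucas_V n) / 12 - (-1) ^ n / 6"
  shows "real (c4_tilings n {}) = lucas_V (n + 1) / 6 + (-1) ^ n / 3
    \<and> real (c4_tilings n {0, 1, 2, 3}) = lucas_V n / 6 - (-1) ^ n / 3
    \<and> real (c4_tilings n {0, 1}) = P \<and> real (c4_tilings n {1, 2}) = P
    \<and> real (c4_tilings n {2, 3}) = P \<and> real (c4_tilings n {0, 3}) = P"
  using assms unfolding P_def
proof (induction n rule: nat_induct_at_least)
  case base
  then show ?case
    using c4_tilings_one lucas_V_1 lucas_V_2 by (simp add: numeral_2_eq_2)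
next
  case (Suc n)
  note IH = Suc(2)
  have V: "lucas_V (Suc n + 1) = 4 * lucas_V (n + 1) - lucas_V n"
    using lucas_V_rec[of n] by simp
  show ?case
    using IH unfolding c4_tilings_Suc[OF Suc(1)] V
    by (elim conjE, simp only: of_nat_add of_nat_mult of_nat_numeral) (simp add: field_simps)
qed

lemma num_domino_tilings_cycle4_path:
  assumes "1 \<le> n"
  shows "real (num_domino_tilings (cart_prod (cycle_graph 4) (path_graph n)))
           = lucas_V (n + 1) / 6 + (-1) ^ n / 3"
  using c4_tilings_closed_form[OF assms] by (simp add: num_domino_tilings_prism[OF simple_graph_cycle4])

lemma conjugate_powers_mult: "(2 + sqrt 3) ^ n * (2 - sqrt 3) ^ n = (1::real)"
proof -
  have "(2 + sqrt 3) * (2 - sqrt 3) = (1::real)" by (simp add: algebra_simps)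
  then show ?thesis by (metis power_mult_distrib power_one)
qed

lemma lucas_V_odd_eq_square:
  "lucas_V (2 * n + 1) / 6 + 1 / 3
     = (((3 + sqrt 3) * (2 + sqrt 3) ^ n + (3 - sqrt 3) * (2 - sqrt 3) ^ n) / 6)\<^sup>2"
proof -
  define R S where "R = (2 + sqrt 3) ^ n" and "S = (2 - sqrt 3) ^ n"
  have RS: "R * S = 1" using conjugate_powers_mult unfolding R_def S_def .
  have V: "lucas_V (2 * n + 1) = (2 + sqrt 3) * R\<^sup>2 + (2 - sqrt 3) * S\<^sup>2"
    unfolding lucas_V_def R_def S_def by (simp add: power_mult power_add mult.commute)
  have "(3 + sqrt 3)\<^sup>2 = 6 * (2 + sqrt (3::real))" "(3 - sqrt 3)\<^sup>2 = 6 * (2 - sqrt (3::real))"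
    "(3 + sqrt 3) * (3 - sqrt 3) = (6::real)"
    by (simp_all add: power2_eq_square algebra_simps)
  then have "(((3 + sqrt 3) * R + (3 - sqrt 3) * S) / 6)\<^sup>2
      = ((2 + sqrt 3) * R\<^sup>2 + (2 - sqrt 3) * S\<^sup>2 + 2 * (R * S)) / 6"
    by (simp add: power2_eq_square field_simps)
  then show ?thesis unfolding V RS R_def[symmetric] S_def[symmetric] by (simp add: field_simps)
qed

lemma lucas_V_even_eq_square:
  "lucas_V (2 * n) / 6 - 1 / 3 = 2 * (((2 + sqrt 3) ^ n - (2 - sqrt 3) ^ n) / (2 * sqrt 3))\<^sup>2"
proof -
  define R S where "R = (2 + sqrt 3) ^ n" and "S = (2 - sqrt 3) ^ n"
  have RS: "R * S = 1" using conjugate_powers_mult unfolding R_def S_def .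
  have V: "lucas_V (2 * n) = R\<^sup>2 + S\<^sup>2"
    unfolding lucas_V_def R_def S_def by (simp add: power_mult mult.commute)
  have "2 * ((R - S) / (2 * sqrt 3))\<^sup>2 = (R\<^sup>2 + S\<^sup>2 - 2 * (R * S)) / 6"
    by (simp add: power2_eq_square field_simps)
  then show ?thesis unfolding V RS R_def[symmetric] S_def[symmetric] by (simp add: field_simps)
qed

theorem theorem3:
  fixes G :: "nat \<Rightarrow> nat" and A B :: "nat \<Rightarrow> real"
  defines "G \<equiv> \<lambda>n. num_domino_tilings (cart_prod (cycle_graph 4) (path_graph n))"
    and "A \<equiv> \<lambda>n. ((3 + sqrt 3) * (2 + sqrt 3) ^ n + (3 - sqrt 3) * (2 - sqrt 3) ^ n) / 6"
    and "B \<equiv> \<lambda>n. ((2 + sqrt 3) ^ n - (2 - sqrt 3) ^ n) / (2 * sqrt 3)"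
  shows "(\<forall>n\<ge>1. real (G n) =
            ((2 + sqrt 3) ^ (n + 1) + (2 - sqrt 3) ^ (n + 1)) / 6 + (-1) ^ n / 3)
       \<and> (\<forall>n\<ge>1. real (G (2 * n)) = (A n)\<^sup>2 \<and> real (G (2 * n - 1)) = 2 * (B n)\<^sup>2)"
proof (intro conjI allI impI)
  fix n :: nat assume n: "n \<ge> 1"
  show "real (G n) = ((2 + sqrt 3) ^ (n + 1) + (2 - sqrt 3) ^ (n + 1)) / 6 + (-1) ^ n / 3"
    unfolding G_def num_domino_tilings_cycle4_path[OF n] lucas_V_def ..
  have "real (G (2 * n)) = lucas_V (2 * n + 1) / 6 + (-1) ^ (2 * n) / 3"
    unfolding G_def by (rule num_domino_tilings_cycle4_path) (use n in simp)
  then show "real (G (2 * n)) = (A n)\<^sup>2"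
    unfolding A_def lucas_V_odd_eq_square[symmetric] by simp
  have "real (G (2 * n - 1)) = lucas_V (2 * n - 1 + 1) / 6 + (-1) ^ (2 * n - 1) / 3"
    unfolding G_def by (rule num_domino_tilings_cycle4_path) (use n in simp)
  moreover have "2 * n - 1 + 1 = 2 * n" and "odd (2 * n - 1)" using n by auto
  ultimately show "real (G (2 * n - 1)) = 2 * (B n)\<^sup>2"
    unfolding B_def lucas_V_even_eq_square[symmetric] by simp
qed

end
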